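(* Assume the hypotheses listed in the context. Then there exists $\delta^*>0$ with the following property: if $0<\delta_1,\delta_2\le\delta^*$ and, for $i=1,2$, $W^i=(w^i_1,\dots,w^i_n)\in C^1([-\delta_i,\delta_i];\mathbb R^n)$ with $w^i_1([-\delta_i,\delta_i])\subseteq[-\delta_i,\delta_i]$ satisfies $(W^i)'(t)=H(t;W^i(t),W^i(w^i_1(t));(W^i)'(t),(W^i)'(w^i_1(t)))$ for $|t|\le\delta_i$, $W^i(0)=0$, $(W^i)'(0)=P$, and $(t;W^i(t),W^i(w^i_1(t));(W^i)'(t),(W^i)'(w^i_1(t)))\in N_\varepsilon(\mathcal P)$ for $|t|\le\delta_i$, then $W^1=W^2$ on $[-\min(\delta_1,\delta_2),\min(\delta_1,\delta_2)]$.
   Context: Hypotheses: $\|\cdot\|$ is a norm on $\mathbb R^n$; $H=(h_1,\dots,h_n)$ is continuous from an open subset of $\mathbb R^{4n+1}$ to $\mathbb R^n$, written $H(t;\zeta^0,\zeta^1;\xi^0,\xi^1)$; $P=(p_1,\dots,p_n)$ satisfies $P=H(0;\mathbf0,\mathbf0;P,P)$ and $|p_1|\le1$; $\mathcal P=(0;\mathbf0,\mathbf0;P,P)$; $N_\varepsilon(\mathcal P)=\{(t;\zeta^0,\zeta^1;\xi^0,\xi^1):|t|+\|\zeta^0\|+\|\zeta^1\|+\|\xi^0-P\|+\|\xi^1-P\|\le\varepsilon\}$ lies in the domain of $H$, and on it: (i) $H$ is $\Lambda$-Lipschitz in $t$; (ii) $\|H(t;\bar\zeta^0,\bar\zeta^1;\xi^0,\xi^1)-H(t;\zeta^0,\zeta^1;\xi^0,\xi^1)\|\le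 L_0\|\bar\zeta^0-\zeta^0\|+L_1\|\bar\zeta^1-\zeta^1\|$; (iii) $\|H(t;\zeta^0,\zeta^1;\bar\xi^0,\bar\xi^1)-H(t;\zeta^0,\zeta^1;\xi^0,\xi^1)\|\le C_0\|\bar\xi^0-\xi^0\|+C_1\|\bar\xi^1-\xi^1\|$ with $C_0+C_1<1$; (iv) $|h_1|\le1$. *)

theory Defs
  imports "HOL-Analysis.Analysis"
begin

definition is_norm :: "(real ^ 'n \<Rightarrow> real) \<Rightarrow> bool" where
  "is_norm nrm \<longleftrightarrow>
     (\<forall>x. 0 \<le> nrm x) \<and> (\<forall>x. nrm x = 0 \<longleftrightarrow> x = 0) \<and>
     (\<forall>c x. nrm (c *\<^sub>R x) = \<bar>c\<bar> * nrm x) \<and>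
     (\<forall>x y. nrm (x + y) \<le> nrm x + nrm y)"

definition Nbhd ::
  "(real ^ 'n \<Rightarrow> real) \<Rightarrow> real ^ 'n \<Rightarrow> real \<Rightarrow>
   (real \<times> (real ^ 'n) \<times> (real ^ 'n) \<times> (real ^ 'n) \<times> (real ^ 'n)) set" where
  "Nbhd nrm P eps = {(t, z0, z1, x0, x1).
     \<bar>t\<bar> + nrm z0 + nrm z1 + nrm (x0 - P) + nrm (x1 - P) \<le> eps}"

end

theory Submission
  imports Defs
begin

text \<open>Every solution is Lipschitz, and its delay \<open>w\<^sub>1\<close> is 1-Lipschitz with
  \<open>|w\<^sub>1(t)| \<le> |t|\<close> because \<open>|h\<^sub>1| \<le> 1\<close>. Feeding these bounds into the equation and taking
  suprema, the contraction \<open>C\<^sub>0 + C\<^sub>1 < 1\<close> yields \<open>\<parallel>W' - P\<parallel> = O(\<delta>)\<close> and a Lipschitz bound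
  for \<open>W'\<close>; hence for small \<open>\<delta>\<close> all arguments of \<open>H\<close> stay in a box on which \<open>H\<close> is
  Lipschitz in all variables jointly. For two solutions let \<open>a\<close> be the supremum of
  \<open>\<parallel>W\<^sub>1' - W\<^sub>2'\<parallel>\<close> on the common interval. Then \<open>W\<^sub>1 - W\<^sub>2\<close> and the gap between the two
  delays are \<open>O(a\<delta>)\<close>, and the equation gives \<open>a \<le> (C\<^sub>0 + C\<^sub>1 + Q\<delta>) a\<close>, so \<open>a = 0\<close> once
  \<open>Q\<delta> < 1 - C\<^sub>0 - C\<^sub>1\<close>.\<close>

lemma norm_diff_le_of_vector_derivative_bound:
  fixes f :: "real \<Rightarrow> 'b::real_normed_vector"
  assumes "\<And>t. t \<in> {a..b} \<Longrightarrow> (f has_vector_derivative f' t) (at t within {a..b})"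
    and "\<And>t. t \<in> {a..b} \<Longrightarrow> norm (f' t) \<le> B"
    and "x \<in> {a..b}" "y \<in> {a..b}"
  shows "norm (f x - f y) \<le> B * \<bar>x - y\<bar>"
  using differentiable_bound[of "{a..b}" f "\<lambda>t h. h *\<^sub>R f' t" B x y] assms
  by (simp add: has_vector_derivative_def onorm_scaleR_left onorm_id)

lemma
  assumes "is_norm nrm"
  shows is_norm_nonneg: "0 \<le> nrm x"
    and is_norm_eq_0: "nrm x = 0 \<longleftrightarrow> x = 0"
    and is_norm_scaleR: "nrm (c *\<^sub>R x) = \<bar>c\<bar> * nrm x"
    and is_norm_triangle: "nrm (x + y) \<le> nrm x + nrm y"
  using assms unfolding is_norm_def by blast+

lemma is_norm_zero:
  assumes "is_norm nrm"
  shows "nrm 0 = 0"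
  using is_norm_eq_0[OF assms] by simp

lemma is_norm_minus_commute:
  assumes "is_norm nrm"
  shows "nrm (x - y) = nrm (y - x)"
  using is_norm_scaleR[OF assms, of "-1" "y - x"] by simp

lemma is_norm_triangle_diff:
  assumes "is_norm nrm"
  shows "nrm (x - z) \<le> nrm (x - y) + nrm (y - z)"
  using is_norm_triangle[OF assms, of "x - y" "y - z"] by simp

lemma is_norm_sum:
  assumes "is_norm nrm"
  shows "nrm (sum f A) \<le> (\<Sum>i\<in>A. nrm (f i))"
proof (induction A rule: infinite_finite_induct)
  case (insert x F)
  then show ?case using is_norm_triangle[OF assms, of "f x" "sum f F"] by simp
qed (simp_all add: is_norm_zero[OF assms])

lemma is_norm_le_norm:
  fixes nrm :: "real ^ 'n \<Rightarrow> real"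
  assumes "is_norm nrm"
  obtains c where "c > 0" "\<And>x. nrm x \<le> c * norm x"
proof
  let ?c = "1 + (\<Sum>i\<in>UNIV. nrm (axis i (1::real)))"
  show "?c > 0"
    using is_norm_nonneg[OF assms] by (simp add: add_pos_nonneg sum_nonneg)
  fix x :: "real ^ 'n"
  have "nrm x = nrm (\<Sum>i\<in>UNIV. x $ i *\<^sub>R axis i 1)"
    using basis_expansion[of x] by (simp add: scalar_mult_eq_scaleR)
  also have "\<dots> \<le> (\<Sum>i\<in>UNIV. nrm (x $ i *\<^sub>R axis i 1))"
    by (rule is_norm_sum[OF assms])
  also have "\<dots> = (\<Sum>i\<in>UNIV. \<bar>x $ i\<bar> * nrm (axis i 1))"
    by (simp add: is_norm_scaleR[OF assms])
  also have "\<dots> \<le> (\<Sum>i\<in>UNIV. norm x * nrm (axis i 1))"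
    by (intro sum_mono mult_right_mono component_le_norm_cart is_norm_nonneg[OF assms])
  also have "\<dots> \<le> ?c * norm x"
    by (simp add: sum_distrib_left[symmetric] algebra_simps)
  finally show "nrm x \<le> ?c * norm x" .
qed

text \<open>The converse bound comes from the minimum of the continuous function \<open>nrm\<close> on the
  compact unit sphere.\<close>

lemma norm_le_is_norm:
  fixes nrm :: "real ^ 'n \<Rightarrow> real"
  assumes "is_norm nrm"
  obtains c where "c > 0" "\<And>x. norm x \<le> c * nrm x"
proof -
  obtain C where C: "C > 0" "\<And>x. nrm x \<le> C * norm x"
    using is_norm_le_norm[OF assms] by blast
  have "C-lipschitz_on UNIV nrm"
  proof (rule lipschitz_onI)
    fix x y :: "real ^ 'n"
    have "nrm x \<le> nrm (x - y) + nrm y" "nrm y \<le> nrm (y - x) + nrm x"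
      using is_norm_triangle_diff[OF assms, of _ 0] by (simp_all only: diff_zero)
    then show "dist (nrm x) (nrm y) \<le> C * dist x y"
      using C(2)[of "x - y"] is_norm_minus_commute[OF assms, of x y]
      by (simp add: dist_real_def dist_norm abs_le_iff)
  qed (use C in simp)
  then have "continuous_on (sphere 0 1) nrm"
    using lipschitz_on_continuous_on continuous_on_subset by blast
  moreover obtain v :: "real ^ 'n" where "norm v = 1"
    using vector_choose_size[of 1] by auto
  ultimately obtain m where m: "norm m = 1" "\<And>y. norm y = 1 \<Longrightarrow> nrm m \<le> nrm y"
    using continuous_attains_inf[of "sphere (0::real ^ 'n) 1" nrm] by fastforce
  have m_pos: "nrm m > 0"
    using m(1) is_norm_nonneg[OF assms, of m] is_norm_eq_0[OF assms, of m] by force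
  show thesis
  proof
    show "1 / nrm m > 0" using m_pos by simp
    fix x :: "real ^ 'n"
    show "norm x \<le> 1 / nrm m * nrm x"
    proof (cases "x = 0")
      case False
      have "nrm m \<le> nrm ((1 / norm x) *\<^sub>R x)" using m(2) False by simp
      also have "\<dots> = nrm x / norm x" by (simp add: is_norm_scaleR[OF assms])
      finally show ?thesis using m_pos False by (simp add: field_simps)
    qed (simp add: is_norm_zero[OF assms])
  qed
qed

lemma is_norm_equivalent_norm:
  fixes nrm :: "real ^ 'n \<Rightarrow> real"
  assumes "is_norm nrm"
  obtains c where "c > 0" "\<And>x. nrm x \<le> c * norm x" "\<And>x. norm x \<le> c * nrm x"
proof -
  obtain c1 c2 where c: "c1 > 0" "\<And>x. nrm x \<le> c1 * norm x" "c2 > 0" "\<And>x. norm x \<le> c2 * nrm x"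
    using is_norm_le_norm[OF assms] norm_le_is_norm[OF assms] by metis
  show thesis
  proof
    show "max c1 c2 > 0" using c by simp
    fix x
    show "nrm x \<le> max c1 c2 * norm x"
      using c(2)[of x] mult_right_mono[of c1 "max c1 c2" "norm x"] by simp
    show "norm x \<le> max c1 c2 * nrm x"
      using c(4)[of x] mult_right_mono[of c2 "max c1 c2" "nrm x"] is_norm_nonneg[OF assms] by simp
  qed
qed

lemma bound_by_contraction:
  fixes g :: "'a \<Rightarrow> real"
  assumes "S \<noteq> {}" "\<And>x. x \<in> S \<Longrightarrow> g x \<le> B" "\<beta> < 1"
    and "\<And>a. (\<And>y. y \<in> S \<Longrightarrow> g y \<le> a) \<Longrightarrow> \<forall>x\<in>S. g x \<le> \<alpha> + \<beta> * a"
  shows "\<forall>x\<in>S. g x \<le> \<alpha> / (1 - \<beta>)"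
proof -
  define a where "a = Sup (g ` S)"
  have "bdd_above (g ` S)"
    using assms(2) by (meson bdd_aboveI2)
  then have bounded: "g y \<le> a" if "y \<in> S" for y
    unfolding a_def using that by (auto intro: cSup_upper)
  have "\<forall>x\<in>S. g x \<le> \<alpha> + \<beta> * a"
    using assms(4) bounded by blast
  then have "a \<le> \<alpha> + \<beta> * a"
    unfolding a_def using assms(1) by (auto intro: cSup_least)
  then have "a \<le> \<alpha> / (1 - \<beta>)" using assms(3) by (simp add: field_simps)
  then show ?thesis using bounded by force
qed

locale neutral_delay_equation =
  fixes nrm :: "real ^ 'n \<Rightarrow> real"
    and i1 :: 'n
    and H :: "real \<Rightarrow> real ^ 'n \<Rightarrow> real ^ 'n \<Rightarrow> real ^ 'n \<Rightarrow> real ^ 'n \<Rightarrow> real ^ 'n"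
    and P :: "real ^ 'n"
    and eps \<Lambda> L0 L1 C0 C1 c :: real
  assumes norm: "is_norm nrm"
    and P_fix: "P = H 0 0 0 P P"
    and eps_pos: "eps > 0"
    and consts_nonneg: "0 \<le> \<Lambda>" "0 \<le> L0" "0 \<le> L1" "0 \<le> C0" "0 \<le> C1"
    and C_lt1: "C0 + C1 < 1"
    and lip_t: "\<And>t t' z0 z1 x0 x1.
        (t, z0, z1, x0, x1) \<in> Nbhd nrm P eps \<Longrightarrow> (t', z0, z1, x0, x1) \<in> Nbhd nrm P eps \<Longrightarrow>
        nrm (H t' z0 z1 x0 x1 - H t z0 z1 x0 x1) \<le> \<Lambda> * \<bar>t' - t\<bar>"
    and lip_z: "\<And>t z0 z1 z0' z1' x0 x1.
        (t, z0, z1, x0, x1) \<in> Nbhd nrm P eps \<Longrightarrow> (t, z0', z1', x0, x1) \<in> Nbhd nrm P eps \<Longrightarrow>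
        nrm (H t z0' z1' x0 x1 - H t z0 z1 x0 x1) \<le> L0 * nrm (z0' - z0) + L1 * nrm (z1' - z1)"
    and lip_x: "\<And>t z0 z1 x0 x1 x0' x1'.
        (t, z0, z1, x0, x1) \<in> Nbhd nrm P eps \<Longrightarrow> (t, z0, z1, x0', x1') \<in> Nbhd nrm P eps \<Longrightarrow>
        nrm (H t z0 z1 x0' x1' - H t z0 z1 x0 x1) \<le> C0 * nrm (x0' - x0) + C1 * nrm (x1' - x1)"
    and h1_bound: "\<And>t z0 z1 x0 x1.
        (t, z0, z1, x0, x1) \<in> Nbhd nrm P eps \<Longrightarrow> \<bar>H t z0 z1 x0 x1 $ i1\<bar> \<le> 1"
    and c_pos: "c > 0"
    and nrm_le_norm: "\<And>x. nrm x \<le> c * norm x"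
    and norm_le_nrm: "\<And>x. norm x \<le> c * nrm x"
begin

lemmas nrm_nonneg = is_norm_nonneg[OF norm]
  and nrm_zero = is_norm_zero[OF norm]
  and nrm_minus_commute = is_norm_minus_commute[OF norm]
  and nrm_triangle_diff = is_norm_triangle_diff[OF norm]

lemma Nbhd_coordinate_mono:
  assumes "(t, z0, z1, x0, x1) \<in> Nbhd nrm P eps"
    and "\<bar>t'\<bar> \<le> \<bar>t\<bar>" "nrm z0' \<le> nrm z0" "nrm z1' \<le> nrm z1"
    and "nrm (x0' - P) \<le> nrm (x0 - P)" "nrm (x1' - P) \<le> nrm (x1 - P)"
  shows "(t', z0', z1', x0', x1') \<in> Nbhd nrm P eps"
  using assms unfolding Nbhd_def by auto

text \<open>The hypotheses only control one group of arguments at a time, so the two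
  intermediate points of the path must lie in the neighbourhood too.\<close>

lemma H_diff_le:
  assumes "(t, z0, z1, x0, x1) \<in> Nbhd nrm P eps" "(t', z0, z1, x0, x1) \<in> Nbhd nrm P eps"
    and "(t', z0', z1', x0, x1) \<in> Nbhd nrm P eps" "(t', z0', z1', x0', x1') \<in> Nbhd nrm P eps"
  shows "nrm (H t z0 z1 x0 x1 - H t' z0' z1' x0' x1')
    \<le> \<Lambda> * \<bar>t - t'\<bar> + L0 * nrm (z0 - z0') + L1 * nrm (z1 - z1')
      + C0 * nrm (x0 - x0') + C1 * nrm (x1 - x1')"
proof -
  let ?A = "H t z0 z1 x0 x1" and ?B = "H t' z0 z1 x0 x1"
    and ?C = "H t' z0' z1' x0 x1" and ?D = "H t' z0' z1' x0' x1'"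
  have "nrm (?A - ?D) \<le> nrm (?B - ?A) + nrm (?C - ?B) + nrm (?D - ?C)"
    using nrm_triangle_diff[of ?A ?D ?B] nrm_triangle_diff[of ?B ?D ?C]
      nrm_minus_commute[of ?A ?B] nrm_minus_commute[of ?B ?C] nrm_minus_commute[of ?C ?D]
    by linarith
  also have "\<dots> \<le> \<Lambda> * \<bar>t' - t\<bar> + (L0 * nrm (z0' - z0) + L1 * nrm (z1' - z1))
      + (C0 * nrm (x0' - x0) + C1 * nrm (x1' - x1))"
    using lip_t[OF assms(1,2)] lip_z[OF assms(2,3)] lip_x[OF assms(3,4)] by linarith
  finally show ?thesis
    by (simp add: nrm_minus_commute[of z0'] nrm_minus_commute[of z1'] nrm_minus_commute[of x0']
        nrm_minus_commute[of x1'] abs_minus_commute)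
qed

lemma H_minus_P_le:
  assumes "(t, z0, z1, x0, x1) \<in> Nbhd nrm P eps"
  shows "nrm (H t z0 z1 x0 x1 - P)
    \<le> \<Lambda> * \<bar>t\<bar> + L0 * nrm z0 + L1 * nrm z1 + C0 * nrm (x0 - P) + C1 * nrm (x1 - P)"
proof -
  have "(0, z0, z1, x0, x1) \<in> Nbhd nrm P eps" "(0, 0, 0, x0, x1) \<in> Nbhd nrm P eps"
    "(0, 0, 0, P, P) \<in> Nbhd nrm P eps"
    by (rule Nbhd_coordinate_mono[OF assms]; simp add: nrm_nonneg nrm_zero)+
  from H_diff_le[OF assms this] show ?thesis
    by (simp flip: P_fix)
qed

text \<open>Unlike \<open>Nbhd\<close>, this is a product set, so mixing the coordinates of two of its points
  stays inside; and \<open>inner_box (eps / 5) \<subseteq> Nbhd nrm P eps\<close>.\<close>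

definition inner_box :: "real \<Rightarrow> (real \<times> (real ^ 'n) \<times> (real ^ 'n) \<times> (real ^ 'n) \<times> (real ^ 'n)) set" where
  "inner_box r = {(t, z0, z1, x0, x1). \<bar>t\<bar> \<le> r \<and> nrm z0 \<le> r \<and> nrm z1 \<le> r \<and>
     nrm (x0 - P) \<le> r \<and> nrm (x1 - P) \<le> r}"

lemma H_diff_le_inner_box:
  assumes "(t, z0, z1, x0, x1) \<in> inner_box (eps / 5)" "(t', z0', z1', x0', x1') \<in> inner_box (eps / 5)"
  shows "nrm (H t z0 z1 x0 x1 - H t' z0' z1' x0' x1')
    \<le> \<Lambda> * \<bar>t - t'\<bar> + L0 * nrm (z0 - z0') + L1 * nrm (z1 - z1')
      + C0 * nrm (x0 - x0') + C1 * nrm (x1 - x1')"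
proof (rule H_diff_le)
  have "inner_box (eps / 5) \<subseteq> Nbhd nrm P eps"
    unfolding inner_box_def Nbhd_def by auto
  then show "(t, z0, z1, x0, x1) \<in> Nbhd nrm P eps" "(t', z0, z1, x0, x1) \<in> Nbhd nrm P eps"
    "(t', z0', z1', x0, x1) \<in> Nbhd nrm P eps" "(t', z0', z1', x0', x1') \<in> Nbhd nrm P eps"
    using assms unfolding inner_box_def by blast+
qed

lemma norm_diff_le_of_nrm_derivative_bound:
  assumes "\<And>t. t \<in> {a..b} \<Longrightarrow> (f has_vector_derivative f' t) (at t within {a..b})"
    and "\<And>t. t \<in> {a..b} \<Longrightarrow> nrm (f' t) \<le> B"
    and "x \<in> {a..b}" "y \<in> {a..b}"
  shows "norm (f x - f y) \<le> c * B * \<bar>x - y\<bar>"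
proof (rule norm_diff_le_of_vector_derivative_bound[OF assms(1) _ assms(3,4)])
  fix t assume "t \<in> {a..b}"
  then show "norm (f' t) \<le> c * B"
    using norm_le_nrm[of "f' t"] assms(2) c_pos by (meson mult_left_mono less_imp_le order_trans)
qed

definition is_solution :: "real \<Rightarrow> (real \<Rightarrow> real ^ 'n) \<Rightarrow> (real \<Rightarrow> real ^ 'n) \<Rightarrow> bool" where
  "is_solution \<delta> W W' \<longleftrightarrow> 0 \<le> \<delta> \<and>
     (\<forall>t\<in>{-\<delta>..\<delta>}. (W has_vector_derivative W' t) (at t within {-\<delta>..\<delta>})) \<and>
     (\<forall>t\<in>{-\<delta>..\<delta>}. W t $ i1 \<in> {-\<delta>..\<delta>}) \<and>
     (\<forall>t\<in>{-\<delta>..\<delta>}. W' t = H t (W t) (W (W t $ i1)) (W' t) (W' (W t $ i1))) \<and> W 0 = 0 \<and>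
     (\<forall>t\<in>{-\<delta>..\<delta>}. (t, W t, W (W t $ i1), W' t, W' (W t $ i1)) \<in> Nbhd nrm P eps)"

definition "K = c\<^sup>2 * (nrm P + eps)"

definition "M0 = (\<Lambda> + (L0 + L1) * K) / (1 - C0 - C1)"

definition "Q = L0 * c\<^sup>2 + L1 * (c\<^sup>2 + K * c) + C1 * M0 * c"

lemma K_nonneg: "0 \<le> K"
  unfolding K_def using nrm_nonneg[of P] eps_pos by simp

lemma M0_nonneg: "0 \<le> M0"
  unfolding M0_def using K_nonneg consts_nonneg C_lt1 by simp

lemma Q_nonneg: "0 \<le> Q"
  unfolding Q_def using consts_nonneg c_pos K_nonneg M0_nonneg by simp

text \<open>\<open>K\<close> is a Lipschitz constant of every solution and \<open>M0\<close> one of its derivative; an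
  admissible radius keeps the arguments of \<open>H\<close> in \<open>inner_box (eps / 5)\<close> and makes the
  uniqueness estimate a contraction.\<close>

definition admissible :: "real \<Rightarrow> bool" where
  "admissible \<delta> \<longleftrightarrow> 0 \<le> \<delta> \<and> (1 + K + M0) * \<delta> \<le> eps / 5 \<and> Q * \<delta> < 1 - C0 - C1"

lemma admissible_downward_closed:
  assumes "admissible \<delta>" "0 \<le> \<delta>'" "\<delta>' \<le> \<delta>"
  shows "admissible \<delta>'"
proof -
  have "(1 + K + M0) * \<delta>' \<le> (1 + K + M0) * \<delta>" "Q * \<delta>' \<le> Q * \<delta>"
    using assms(3) K_nonneg M0_nonneg Q_nonneg by (simp_all add: mult_left_mono)
  then show ?thesis
    using assms unfolding admissible_def by linarith
qed

lemma admissibleD: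
  assumes "admissible \<delta>"
  shows "\<delta> \<le> eps / 5" "K * \<delta> \<le> eps / 5" "M0 * \<delta> \<le> eps / 5"
proof -
  have "0 \<le> \<delta>" "(1 + K + M0) * \<delta> \<le> eps / 5"
    using assms unfolding admissible_def by auto
  moreover have "0 \<le> K * \<delta>" "0 \<le> M0 * \<delta>"
    using calculation(1) K_nonneg M0_nonneg by simp_all
  ultimately show "\<delta> \<le> eps / 5" "K * \<delta> \<le> eps / 5" "M0 * \<delta> \<le> eps / 5"
    by (auto simp: distrib_right)
qed

lemma admissible_exists: "\<exists>\<delta>>0. admissible \<delta>"
proof (intro exI conjI)
  let ?\<delta> = "min (eps / (5 * (1 + K + M0))) ((1 - C0 - C1) / (2 * (1 + Q)))"
  have KM0: "1 + K + M0 > 0" and Q1: "1 + Q > 0"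
    using K_nonneg M0_nonneg Q_nonneg by linarith+
  show "?\<delta> > 0"
    using eps_pos KM0 Q1 C_lt1 by simp
  have "(1 + K + M0) * ?\<delta> \<le> (1 + K + M0) * (eps / (5 * (1 + K + M0)))"
    using KM0 by (intro mult_left_mono) auto
  also have "\<dots> = eps / 5"
    using KM0 by (simp add: field_simps)
  finally have small: "(1 + K + M0) * ?\<delta> \<le> eps / 5" .
  have "Q * ?\<delta> \<le> (1 + Q) * ((1 - C0 - C1) / (2 * (1 + Q)))"
    using Q_nonneg C_lt1 eps_pos KM0 by (intro mult_mono) auto
  also have "\<dots> = (1 - C0 - C1) / 2"
    using Q1 by (simp add: field_simps)
  also have "\<dots> < 1 - C0 - C1"
    using C_lt1 by simp
  finally show "admissible ?\<delta>"
    unfolding admissible_def using \<open>?\<delta> > 0\<close> small by simp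
qed

context
  fixes \<delta> :: real and W W' :: "real \<Rightarrow> real ^ 'n"
  assumes sol: "is_solution \<delta> W W'"
begin

lemma
  shows solution_radius_nonneg: "0 \<le> \<delta>"
    and solution_has_vector_derivative:
      "t \<in> {-\<delta>..\<delta>} \<Longrightarrow> (W has_vector_derivative W' t) (at t within {-\<delta>..\<delta>})"
    and solution_delay_mem: "t \<in> {-\<delta>..\<delta>} \<Longrightarrow> W t $ i1 \<in> {-\<delta>..\<delta>}"
    and solution_equation:
      "t \<in> {-\<delta>..\<delta>} \<Longrightarrow> W' t = H t (W t) (W (W t $ i1)) (W' t) (W' (W t $ i1))"
    and solution_at_0: "W 0 = 0"
    and solution_in_Nbhd:
      "t \<in> {-\<delta>..\<delta>} \<Longrightarrow> (t, W t, W (W t $ i1), W' t, W' (W t $ i1)) \<in> Nbhd nrm P eps"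
  using sol unfolding is_solution_def by auto

lemma solution_derivative_near_P_eps:
  assumes "t \<in> {-\<delta>..\<delta>}"
  shows "nrm (W' t - P) \<le> eps"
  using solution_in_Nbhd[OF assms] nrm_nonneg unfolding Nbhd_def
  by (smt (verit, best) case_prodD mem_Collect_eq)

lemma solution_delay_lipschitz:
  assumes "t \<in> {-\<delta>..\<delta>}" "s \<in> {-\<delta>..\<delta>}"
  shows "\<bar>W t $ i1 - W s $ i1\<bar> \<le> \<bar>t - s\<bar>"
proof -
  have "norm (W t $ i1 - W s $ i1) \<le> 1 * \<bar>t - s\<bar>"
  proof (rule norm_diff_le_of_vector_derivative_bound[where f' = "\<lambda>t. W' t $ i1"])
    fix x assume x: "x \<in> {-\<delta>..\<delta>}"
    show "((\<lambda>t. W t $ i1) has_vector_derivative W' x $ i1) (at x within {-\<delta>..\<delta>})"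
      by (rule bounded_linear.has_vector_derivative[OF bounded_linear_vec_nth
            solution_has_vector_derivative[OF x]])
    show "norm (W' x $ i1) \<le> 1"
      using h1_bound[OF solution_in_Nbhd[OF x]] solution_equation[OF x] by simp
  qed (use assms in auto)
  then show ?thesis by simp
qed

lemma solution_delay_le:
  assumes "t \<in> {-\<delta>..\<delta>}"
  shows "\<bar>W t $ i1\<bar> \<le> \<bar>t\<bar>"
  using solution_delay_lipschitz[OF assms, of 0] solution_at_0 solution_radius_nonneg by simp

lemma solution_lipschitz:
  assumes "t \<in> {-\<delta>..\<delta>}" "s \<in> {-\<delta>..\<delta>}"
  shows "nrm (W t - W s) \<le> K * \<bar>t - s\<bar>"
proof -
  have "nrm (W' x) \<le> nrm P + eps" if "x \<in> {-\<delta>..\<delta>}" for x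
    using nrm_triangle_diff[of "W' x" 0 P] solution_derivative_near_P_eps[OF that]
      nrm_minus_commute[of 0 P] by simp
  then have "norm (W t - W s) \<le> c * (nrm P + eps) * \<bar>t - s\<bar>"
    using norm_diff_le_of_nrm_derivative_bound solution_has_vector_derivative assms by blast
  then have "c * norm (W t - W s) \<le> c * (c * (nrm P + eps) * \<bar>t - s\<bar>)"
    using c_pos by simp
  then show ?thesis
    using nrm_le_norm[of "W t - W s"] unfolding K_def power2_eq_square by (simp add: algebra_simps)
qed

lemma solution_le:
  assumes "t \<in> {-\<delta>..\<delta>}"
  shows "nrm (W t) \<le> K * \<delta>"
proof -
  have "K * \<bar>t\<bar> \<le> K * \<delta>"
    using assms K_nonneg by (intro mult_left_mono) auto
  then show ?thesis
    using solution_lipschitz[OF assms, of 0] solution_at_0 solution_radius_nonneg by simp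
qed

lemma solution_derivative_near_P:
  assumes "t \<in> {-\<delta>..\<delta>}"
  shows "nrm (W' t - P) \<le> M0 * \<delta>"
proof -
  have "\<forall>t\<in>{-\<delta>..\<delta>}. nrm (W' t - P) \<le> (\<Lambda> * \<delta> + (L0 + L1) * (K * \<delta>)) / (1 - (C0 + C1))"
  proof (rule bound_by_contraction[where B = eps])
    show "{-\<delta>..\<delta>} \<noteq> {}"
      using solution_radius_nonneg by simp
    show "nrm (W' t - P) \<le> eps" if "t \<in> {-\<delta>..\<delta>}" for t
      using solution_derivative_near_P_eps[OF that] .
    fix a assume a: "\<And>t. t \<in> {-\<delta>..\<delta>} \<Longrightarrow> nrm (W' t - P) \<le> a"
    show "\<forall>t\<in>{-\<delta>..\<delta>}. nrm (W' t - P) \<le> \<Lambda> * \<delta> + (L0 + L1) * (K * \<delta>) + (C0 + C1) * a"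
    proof
      fix t assume t: "t \<in> {-\<delta>..\<delta>}"
      let ?w = "W t $ i1"
      have w: "?w \<in> {-\<delta>..\<delta>}"
        by (rule solution_delay_mem[OF t])
      have "nrm (W' t - P) \<le> \<Lambda> * \<bar>t\<bar> + L0 * nrm (W t) + L1 * nrm (W ?w)
          + C0 * nrm (W' t - P) + C1 * nrm (W' ?w - P)"
        using H_minus_P_le[OF solution_in_Nbhd[OF t]]
        by (simp only: solution_equation[OF t, symmetric])
      also have "\<dots> \<le> \<Lambda> * \<delta> + L0 * (K * \<delta>) + L1 * (K * \<delta>) + C0 * a + C1 * a"
        using t consts_nonneg solution_le[OF t] solution_le[OF w] a[OF t] a[OF w]
        by (intro add_mono mult_left_mono) auto
      finally show "nrm (W' t - P) \<le> \<Lambda> * \<delta> + (L0 + L1) * (K * \<delta>) + (C0 + C1) * a"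
        by (simp add: algebra_simps)
    qed
  qed (rule C_lt1)
  moreover have "(\<Lambda> * \<delta> + (L0 + L1) * (K * \<delta>)) / (1 - (C0 + C1)) = M0 * \<delta>"
    unfolding M0_def using C_lt1 by (simp add: field_simps)
  ultimately show ?thesis
    using assms by auto
qed

lemma solution_in_inner_box:
  assumes "admissible \<delta>" "t \<in> {-\<delta>..\<delta>}"
  shows "(t, W t, W (W t $ i1), W' t, W' (W t $ i1)) \<in> inner_box (eps / 5)"
proof -
  have w: "W t $ i1 \<in> {-\<delta>..\<delta>}"
    by (rule solution_delay_mem[OF assms(2)])
  show ?thesis
    using admissibleD[OF assms(1)] assms(2) solution_le[OF assms(2)] solution_le[OF w]
      solution_derivative_near_P[OF assms(2)] solution_derivative_near_P[OF w]
    unfolding inner_box_def by auto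
qed

lemma solution_derivative_diff_le:
  assumes "admissible \<delta>" "x \<in> {-\<delta>..\<delta>}" "y \<in> {-\<delta>..\<delta>}"
  shows "nrm (W' x - W' y) \<le> (\<Lambda> + (L0 + L1) * K) * \<bar>x - y\<bar>
    + C0 * nrm (W' x - W' y) + C1 * nrm (W' (W x $ i1) - W' (W y $ i1))"
proof -
  let ?wx = "W x $ i1" and ?wy = "W y $ i1"
  have "nrm (W ?wx - W ?wy) \<le> K * \<bar>?wx - ?wy\<bar>"
    using solution_lipschitz solution_delay_mem assms(2,3) by blast
  also have "\<dots> \<le> K * \<bar>x - y\<bar>"
    using solution_delay_lipschitz[OF assms(2,3)] K_nonneg by (rule mult_left_mono)
  finally have "L1 * nrm (W ?wx - W ?wy) \<le> L1 * (K * \<bar>x - y\<bar>)"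
    using consts_nonneg(3) by (rule mult_left_mono)
  moreover have "L0 * nrm (W x - W y) \<le> L0 * (K * \<bar>x - y\<bar>)"
    using solution_lipschitz[OF assms(2,3)] consts_nonneg(2) by (rule mult_left_mono)
  moreover have "nrm (W' x - W' y) \<le> \<Lambda> * \<bar>x - y\<bar> + L0 * nrm (W x - W y) + L1 * nrm (W ?wx - W ?wy)
      + C0 * nrm (W' x - W' y) + C1 * nrm (W' ?wx - W' ?wy)"
    using H_diff_le_inner_box[OF solution_in_inner_box[OF assms(1,2)] solution_in_inner_box[OF assms(1,3)]]
    by (simp only: solution_equation[OF assms(2), symmetric] solution_equation[OF assms(3), symmetric])
  ultimately show ?thesis
    by (simp add: algebra_simps)
qed

lemma solution_derivative_lipschitz:
  assumes "admissible \<delta>" "t \<in> {-\<delta>..\<delta>}" "s \<in> {-\<delta>..\<delta>}"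
  shows "nrm (W' t - W' s) \<le> M0 * \<bar>t - s\<bar>"
proof -
  define h where "h = \<bar>t - s\<bar>"
  define S where "S = {(x, y). x \<in> {-\<delta>..\<delta>} \<and> y \<in> {-\<delta>..\<delta>} \<and> \<bar>x - y\<bar> \<le> h}"
  have ts: "(t, s) \<in> S"
    using assms unfolding S_def h_def by auto
  have "\<forall>p\<in>S. (\<lambda>(x, y). nrm (W' x - W' y)) p \<le> ((\<Lambda> + (L0 + L1) * K) * h) / (1 - (C0 + C1))"
  proof (rule bound_by_contraction[where B = "2 * eps"])
    show "S \<noteq> {}"
      using ts by auto
    show "(\<lambda>(x, y). nrm (W' x - W' y)) p \<le> 2 * eps" if p: "p \<in> S" for p
    proof -
      obtain x y where "p = (x, y)" "x \<in> {-\<delta>..\<delta>}" "y \<in> {-\<delta>..\<delta>}"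
        using p unfolding S_def by auto
      then show ?thesis
        using nrm_triangle_diff[of "W' x" "W' y" P] nrm_minus_commute[of P "W' y"]
          solution_derivative_near_P_eps[of x] solution_derivative_near_P_eps[of y] by simp
    qed
    fix a assume a: "\<And>p. p \<in> S \<Longrightarrow> (\<lambda>(x, y). nrm (W' x - W' y)) p \<le> a"
    show "\<forall>p\<in>S. (\<lambda>(x, y). nrm (W' x - W' y)) p \<le> (\<Lambda> + (L0 + L1) * K) * h + (C0 + C1) * a"
    proof
      fix p assume "p \<in> S"
      then obtain x y where p: "p = (x, y)" and x: "x \<in> {-\<delta>..\<delta>}" and y: "y \<in> {-\<delta>..\<delta>}"
        and xy: "\<bar>x - y\<bar> \<le> h"
        unfolding S_def by auto
      let ?wx = "W x $ i1" and ?wy = "W y $ i1"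
      have "(?wx, ?wy) \<in> S"
        using solution_delay_mem[OF x] solution_delay_mem[OF y] solution_delay_lipschitz[OF x y] xy
        unfolding S_def by auto
      then have "C1 * nrm (W' ?wx - W' ?wy) \<le> C1 * a"
        using a consts_nonneg(5) by (force intro: mult_left_mono)
      moreover have "C0 * nrm (W' x - W' y) \<le> C0 * a"
        using a[of "(x, y)"] x y xy consts_nonneg(4) unfolding S_def by (force intro: mult_left_mono)
      moreover have "(\<Lambda> + (L0 + L1) * K) * \<bar>x - y\<bar> \<le> (\<Lambda> + (L0 + L1) * K) * h"
        using xy consts_nonneg K_nonneg by (intro mult_left_mono) auto
      ultimately show "(\<lambda>(x, y). nrm (W' x - W' y)) p \<le> (\<Lambda> + (L0 + L1) * K) * h + (C0 + C1) * a"
        using solution_derivative_diff_le[OF assms(1) x y] p by (simp add: algebra_simps)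
    qed
  qed (rule C_lt1)
  moreover have "((\<Lambda> + (L0 + L1) * K) * h) / (1 - (C0 + C1)) = M0 * h"
    unfolding M0_def using C_lt1 by (simp add: field_simps)
  ultimately show ?thesis
    using ts unfolding h_def by auto
qed

end

lemma solutions_diff_norm_le:
  assumes sol1: "is_solution \<delta>1 W1 W1'" and sol2: "is_solution \<delta>2 W2 W2'"
    and "\<delta> \<le> \<delta>1" "\<delta> \<le> \<delta>2"
    and bound: "\<And>y. y \<in> {-\<delta>..\<delta>} \<Longrightarrow> nrm (W1' y - W2' y) \<le> a"
    and x: "x \<in> {-\<delta>..\<delta>}"
  shows "norm (W1 x - W2 x) \<le> c * a * \<delta>"
proof -
  have "((\<lambda>x. W1 x - W2 x) has_vector_derivative W1' y - W2' y) (at y within {-\<delta>..\<delta>})"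
    if "y \<in> {-\<delta>..\<delta>}" for y
  proof (rule has_vector_derivative_diff)
    show "(W1 has_vector_derivative W1' y) (at y within {-\<delta>..\<delta>})"
      using solution_has_vector_derivative[OF sol1, of y] that assms(3)
      by (force intro: has_vector_derivative_within_subset)
    show "(W2 has_vector_derivative W2' y) (at y within {-\<delta>..\<delta>})"
      using solution_has_vector_derivative[OF sol2, of y] that assms(4)
      by (force intro: has_vector_derivative_within_subset)
  qed
  moreover have "0 \<in> {-\<delta>..\<delta>}"
    using x by auto
  ultimately have "norm ((W1 x - W2 x) - (W1 0 - W2 0)) \<le> c * a * \<bar>x - 0\<bar>"
    using bound x by (intro norm_diff_le_of_nrm_derivative_bound)
  moreover have "c * a * \<bar>x\<bar> \<le> c * a * \<delta>"
    using bound[OF \<open>0 \<in> {-\<delta>..\<delta>}\<close>] nrm_nonneg[of "W1' 0 - W2' 0"] c_pos x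
    by (intro mult_left_mono) auto
  ultimately show ?thesis
    using solution_at_0[OF sol1] solution_at_0[OF sol2] by simp
qed

text \<open>The delayed arguments \<open>W1 (W1 x $ i1)\<close> and \<open>W2 (W2 x $ i1)\<close> are compared through
  \<open>W2 (W1 x $ i1)\<close>, using the Lipschitz bounds of \<open>W2\<close> and \<open>W2'\<close>.\<close>

lemma solutions_derivative_diff_contraction:
  assumes sol1: "is_solution \<delta>1 W1 W1'" and sol2: "is_solution \<delta>2 W2 W2'"
    and adm1: "admissible \<delta>1" and adm2: "admissible \<delta>2"
    and "\<delta> \<le> \<delta>1" "\<delta> \<le> \<delta>2"
    and bound: "\<And>y. y \<in> {-\<delta>..\<delta>} \<Longrightarrow> nrm (W1' y - W2' y) \<le> a"
    and x: "x \<in> {-\<delta>..\<delta>}"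
  shows "nrm (W1' x - W2' x) \<le> (C0 + C1 + Q * \<delta>) * a"
proof -
  have x1: "x \<in> {-\<delta>1..\<delta>1}" and x2: "x \<in> {-\<delta>2..\<delta>2}"
    using x assms(5,6) by auto
  let ?w1 = "W1 x $ i1" and ?w2 = "W2 x $ i1"
  have w1: "?w1 \<in> {-\<delta>..\<delta>}" and w2: "?w2 \<in> {-\<delta>..\<delta>}"
    using solution_delay_le[OF sol1 x1] solution_delay_le[OF sol2 x2] x by auto
  have w12: "?w1 \<in> {-\<delta>2..\<delta>2}" "?w2 \<in> {-\<delta>2..\<delta>2}"
    using w1 w2 assms(6) by auto
  have diff_norm: "norm (W1 y - W2 y) \<le> c * a * \<delta>" if "y \<in> {-\<delta>..\<delta>}" for y
    using solutions_diff_norm_le[OF sol1 sol2 assms(5,6)] bound that by blast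
  have diff_nrm: "nrm (W1 y - W2 y) \<le> c\<^sup>2 * a * \<delta>" if "y \<in> {-\<delta>..\<delta>}" for y
    using nrm_le_norm[of "W1 y - W2 y"] mult_left_mono[OF diff_norm[OF that] less_imp_le[OF c_pos]]
    by (simp add: power2_eq_square algebra_simps)
  have delay_gap: "\<bar>?w1 - ?w2\<bar> \<le> c * a * \<delta>"
    using component_le_norm_cart[of "W1 x - W2 x" i1] diff_norm[OF x] by simp
  have "nrm (W1 ?w1 - W2 ?w2) \<le> nrm (W1 ?w1 - W2 ?w1) + nrm (W2 ?w1 - W2 ?w2)"
    by (rule nrm_triangle_diff)
  also have "\<dots> \<le> c\<^sup>2 * a * \<delta> + K * (c * a * \<delta>)"
    using diff_nrm[OF w1] solution_lipschitz[OF sol2 w12] mult_left_mono[OF delay_gap K_nonneg]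
    by linarith
  finally have "L1 * nrm (W1 ?w1 - W2 ?w2) \<le> L1 * (c\<^sup>2 * a * \<delta> + K * (c * a * \<delta>))"
    using consts_nonneg(3) by (rule mult_left_mono)
  moreover have "nrm (W1' ?w1 - W2' ?w2) \<le> nrm (W1' ?w1 - W2' ?w1) + nrm (W2' ?w1 - W2' ?w2)"
    by (rule nrm_triangle_diff)
  then have "nrm (W1' ?w1 - W2' ?w2) \<le> a + M0 * (c * a * \<delta>)"
    using bound[OF w1] solution_derivative_lipschitz[OF sol2 adm2 w12]
      mult_left_mono[OF delay_gap M0_nonneg] by linarith
  then have "C1 * nrm (W1' ?w1 - W2' ?w2) \<le> C1 * (a + M0 * (c * a * \<delta>))"
    using consts_nonneg(5) by (rule mult_left_mono)
  moreover have "L0 * nrm (W1 x - W2 x) \<le> L0 * (c\<^sup>2 * a * \<delta>)"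
    using diff_nrm[OF x] consts_nonneg(2) by (rule mult_left_mono)
  moreover have "C0 * nrm (W1' x - W2' x) \<le> C0 * a"
    using bound[OF x] consts_nonneg(4) by (rule mult_left_mono)
  moreover have "nrm (W1' x - W2' x) \<le> \<Lambda> * \<bar>x - x\<bar> + L0 * nrm (W1 x - W2 x)
      + L1 * nrm (W1 ?w1 - W2 ?w2) + C0 * nrm (W1' x - W2' x) + C1 * nrm (W1' ?w1 - W2' ?w2)"
    using H_diff_le_inner_box[OF solution_in_inner_box[OF sol1 adm1 x1] solution_in_inner_box[OF sol2 adm2 x2]]
    by (simp only: solution_equation[OF sol1 x1, symmetric] solution_equation[OF sol2 x2, symmetric])
  ultimately show ?thesis
    unfolding Q_def by (simp add: algebra_simps)
qed

lemma solutions_agree: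
  assumes sol1: "is_solution \<delta>1 W1 W1'" and sol2: "is_solution \<delta>2 W2 W2'"
    and adm1: "admissible \<delta>1" and adm2: "admissible \<delta>2"
    and t: "t \<in> {- min \<delta>1 \<delta>2 .. min \<delta>1 \<delta>2}"
  shows "W1 t = W2 t"
proof -
  let ?\<delta> = "min \<delta>1 \<delta>2"
  have "admissible ?\<delta>"
    using admissible_downward_closed[OF adm1, of ?\<delta>]
      solution_radius_nonneg[OF sol1] solution_radius_nonneg[OF sol2] by simp
  then have contraction: "C0 + C1 + Q * ?\<delta> < 1"
    unfolding admissible_def by linarith
  have "\<forall>y\<in>{-?\<delta>..?\<delta>}. nrm (W1' y - W2' y) \<le> 0 / (1 - (C0 + C1 + Q * ?\<delta>))"
  proof (rule bound_by_contraction[where B = "2 * eps", OF _ _ contraction])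
    show "{-?\<delta>..?\<delta>} \<noteq> {}"
      using t by auto
    show "nrm (W1' y - W2' y) \<le> 2 * eps" if "y \<in> {-?\<delta>..?\<delta>}" for y
    proof -
      have "y \<in> {-\<delta>1..\<delta>1}" "y \<in> {-\<delta>2..\<delta>2}"
        using that by auto
      then show ?thesis
        using nrm_triangle_diff[of "W1' y" "W2' y" P] nrm_minus_commute[of P "W2' y"]
          solution_derivative_near_P_eps[OF sol1] solution_derivative_near_P_eps[OF sol2]
        by fastforce
    qed
    fix a assume "\<And>y. y \<in> {-?\<delta>..?\<delta>} \<Longrightarrow> nrm (W1' y - W2' y) \<le> a"
    then show "\<forall>y\<in>{-?\<delta>..?\<delta>}. nrm (W1' y - W2' y) \<le> 0 + (C0 + C1 + Q * ?\<delta>) * a"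
      using solutions_derivative_diff_contraction[OF sol1 sol2 adm1 adm2 min.cobounded1 min.cobounded2]
      by simp
  qed
  then have "norm (W1 t - W2 t) \<le> c * 0 * ?\<delta>"
    by (intro solutions_diff_norm_le[OF sol1 sol2 _ _ _ t]) auto
  then show ?thesis
    by simp
qed

end

theorem theorem4p4:
  fixes nrm :: "real ^ 'n \<Rightarrow> real"
    and i1 :: 'n
    and D :: "(real \<times> (real ^ 'n) \<times> (real ^ 'n) \<times> (real ^ 'n) \<times> (real ^ 'n)) set"
    and H :: "real \<Rightarrow> real ^ 'n \<Rightarrow> real ^ 'n \<Rightarrow> real ^ 'n \<Rightarrow> real ^ 'n \<Rightarrow> real ^ 'n"
    and P :: "real ^ 'n"
    and eps \<Lambda> L0 L1 C0 C1 :: real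
  assumes norm: "is_norm nrm"
    and D_open: "open D"
    and H_cont: "continuous_on D (\<lambda>(t, z0, z1, x0, x1). H t z0 z1 x0 x1)"
    and P_fix: "P = H 0 0 0 P P"
    and P1: "\<bar>P $ i1\<bar> \<le> 1"
    and eps_pos: "eps > 0"
    and N_sub: "Nbhd nrm P eps \<subseteq> D"
    and consts_nonneg: "0 \<le> \<Lambda>" "0 \<le> L0" "0 \<le> L1" "0 \<le> C0" "0 \<le> C1"
    and C_lt1: "C0 + C1 < 1"
    and lip_t: "\<And>t t' z0 z1 x0 x1.
        (t, z0, z1, x0, x1) \<in> Nbhd nrm P eps \<Longrightarrow> (t', z0, z1, x0, x1) \<in> Nbhd nrm P eps \<Longrightarrow>
        nrm (H t' z0 z1 x0 x1 - H t z0 z1 x0 x1) \<le> \<Lambda> * \<bar>t' - t\<bar>"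
    and lip_z: "\<And>t z0 z1 z0' z1' x0 x1.
        (t, z0, z1, x0, x1) \<in> Nbhd nrm P eps \<Longrightarrow> (t, z0', z1', x0, x1) \<in> Nbhd nrm P eps \<Longrightarrow>
        nrm (H t z0' z1' x0 x1 - H t z0 z1 x0 x1) \<le> L0 * nrm (z0' - z0) + L1 * nrm (z1' - z1)"
    and lip_x: "\<And>t z0 z1 x0 x1 x0' x1'.
        (t, z0, z1, x0, x1) \<in> Nbhd nrm P eps \<Longrightarrow> (t, z0, z1, x0', x1') \<in> Nbhd nrm P eps \<Longrightarrow>
        nrm (H t z0 z1 x0' x1' - H t z0 z1 x0 x1) \<le> C0 * nrm (x0' - x0) + C1 * nrm (x1' - x1)"
    and h1_bound: "\<And>t z0 z1 x0 x1.
        (t, z0, z1, x0, x1) \<in> Nbhd nrm P eps \<Longrightarrow> \<bar>H t z0 z1 x0 x1 $ i1\<bar> \<le> 1"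
  shows "\<exists>\<delta>s > 0. \<forall>\<delta>1 \<delta>2 W1 W1' W2 W2'.
     (0 < \<delta>1 \<and> \<delta>1 \<le> \<delta>s \<and> 0 < \<delta>2 \<and> \<delta>2 \<le> \<delta>s \<and>
      (\<forall>(\<delta>, W, W') \<in> {(\<delta>1, W1, W1'), (\<delta>2, W2, W2')}.
         (\<forall>t \<in> {-\<delta>..\<delta>}. (W has_vector_derivative W' t) (at t within {-\<delta>..\<delta>})) \<and>
         continuous_on {-\<delta>..\<delta>} W' \<and>
         (\<forall>t \<in> {-\<delta>..\<delta>}. W t $ i1 \<in> {-\<delta>..\<delta>}) \<and>
         (\<forall>t \<in> {-\<delta>..\<delta>}. W' t = H t (W t) (W (W t $ i1)) (W' t) (W' (W t $ i1))) \<and>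
         W 0 = 0 \<and> W' 0 = P \<and>
         (\<forall>t \<in> {-\<delta>..\<delta>}. (t, W t, W (W t $ i1), W' t, W' (W t $ i1)) \<in> Nbhd nrm P eps)))
     \<longrightarrow> (\<forall>t \<in> {- min \<delta>1 \<delta>2 .. min \<delta>1 \<delta>2}. W1 t = W2 t)"
proof -
  obtain c where c: "c > 0" "\<And>x. nrm x \<le> c * norm x" "\<And>x. norm x \<le> c * nrm x"
    using is_norm_equivalent_norm[OF norm] by blast
  interpret neutral_delay_equation nrm i1 H P eps \<Lambda> L0 L1 C0 C1 c
    by unfold_locales (fact norm P_fix eps_pos consts_nonneg C_lt1 lip_t lip_z lip_x h1_bound c)+
  obtain \<delta>s where "\<delta>s > 0" "admissible \<delta>s"
    using admissible_exists by blast
  have agree: "W1 t = W2 t"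
    if "0 < \<delta>1" "\<delta>1 \<le> \<delta>s" "0 < \<delta>2" "\<delta>2 \<le> \<delta>s"
      and "is_solution \<delta>1 W1 W1'" "is_solution \<delta>2 W2 W2'" "t \<in> {- min \<delta>1 \<delta>2 .. min \<delta>1 \<delta>2}"
    for \<delta>1 \<delta>2 W1 W1' W2 W2' t
    using solutions_agree[OF that(5,6) _ _ that(7)] admissible_downward_closed[OF \<open>admissible \<delta>s\<close>] that(1-4)
    by simp
  show ?thesis
  proof (intro exI[of _ \<delta>s] conjI allI impI ballI, goal_cases)
    case 1
    show ?case by fact
  next
    case (2 \<delta>1 \<delta>2 W1 W1' W2 W2' t)
    then show ?case
      by (intro agree[of \<delta>1 \<delta>2]) (auto simp: is_solution_def)
  qed
qed

end
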